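(* Suppose that $\theta\in(0,1]$, $M>1$, $T>1$, $n\ge 2M$ and $f\in\mathrm{PL}_n^2\cap G_M^2$. Then for any $k\in\{\lceil\sqrt n\rceil,\dots,\lfloor\theta n\rfloor-1\}$, \[\sum_{j=k}^{\lfloor\theta n\rfloor-1}\mathcal E^+_X(I_j,\Gamma_{M,T}(f,n),T)\ge\int_{k/n}^{\lfloor\theta n\rfloor/n}\Big(\sqrt{2R^*_X(f(s))}-\sqrt{f_X'(s)}\Big)^2ds-O\Big(\frac{M^4}{n^{1/4}}+\frac{M^3n}{T^{1/2}}\Big).\]
   Context: $O(a)$ denotes a quantity bounded in absolute value by $Ca$ for a universal constant $C$. Let $R(x,y)=\frac{x+1}{y+1}\vee\frac{y+1}{x+1}$, $P(x,y)=\frac{y+1}{2(x+1)}\mathbb 1_{x\ge y}+\big(1-\frac{x+1}{2(y+1)}\big)\mathbb 1_{x<y}$, $R_X=RP$, $R_Y=R(1-P)$. $R^*(x,y)=\frac xy\vee\frac yx$ if $x>0$ or $y>0$, $R^*(0,0)=1$; $P^*(x,y)=\frac y{2x}\mathbb 1_{x\ge y}+(1-\frac x{2y})\mathbb 1_{x<y}$ if $x>0$ or $y>0$, $P^*(0,0)=1/2$; $R^*_X=R^*P^*$ if $y>0$, $R^*_X(x,0)=1/2$. $\|\cdot\|$ is the max norm on $\mathbb R^2$. $E$ is the set of non-decreasing càdlàg $f:[0,1]\to\mathbb R$ with $f(0)=0$ ($f'(s):=\infty$ where not differentiable), with Lévy metric $d(f,g)=\inf\{r>0:f(x-r)-r<g(x)<f(x+r)+r\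 \forall x\in[-r,1+r]\}$ ($f(x)=f(0)$ for $x<0$, $f(1)$ for $x>1$), and on $E^2$ the max of coordinate distances; $f=(f_X,f_Y)$. $G_M=\{f\in E: s/M\le f(s)\le Ms\ \forall s\}$; $G_{M,T}=\{f\in E:s/M-2T^{-2/3}\le f(s)\le M(s+2T^{-2/3})\ \forall s\}$. $\mathrm{PL}_n$ is the set of continuous $f\in E$ linear on each $[i/n,(i+1)/n]$. $I_j=[j/n,(j+1)/n]$. $\Delta_n(f,g)=\max_{0\le i\le n}\|f(i/n)-g(i/n)\|$; $\Gamma_{M,T}(f,n)=B_{\Delta_n}(f,1/n^2)\cap B_d(f,1/n)\cap G_{M,T}^2$ (open balls). For a non-empty interval $I\subset[0,1]$ with infimum $I^-$, supremum $I^+$, length $|I|$, $F\subset E^2$, $T\ge1$: $R^-_X(I,F,T)=\inf\{R_X(Tg(s)):s\in I,g\in F\}$, $R^+_X(I,F,T)$ the corresponding sup; $x^-(s,F)=\inf\{g_X(s):g\in F\}$, $x^+(s,F)=\sup\{g_X(s):g\in F\}$. "$X-$ case": $2R^-_X|I|>x^+(I^+,F)-x^-(I^-,F)$; "$X+$ case": $x^-(I^+,F)-x^+(I^-,F)>2R^+_X|I|$. $\mathcal E^+_X(I,F,T)=(\sqrt{2R^-_X(I,F,T)|I|}-\sqrt{x^+(I^+,F)-x^-(I^-,F)})^2$ in the $X-$ case, $(\sqrt{2R^+_X(I,F,T)|I|}-\sqrt{x^-(I^+,F)-x^+(I^-,F)})^2$ in the $X+$ case, $0$ otherwise. *)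

theory Defs
  imports "HOL-Analysis.Analysis"
begin

type_synonym path2 = "(real \<Rightarrow> real) \<times> (real \<Rightarrow> real)"

definition Rf :: "real \<Rightarrow> real \<Rightarrow> real" where
  "Rf x y = max ((x+1)/(y+1)) ((y+1)/(x+1))"

definition Pf :: "real \<Rightarrow> real \<Rightarrow> real" where
  "Pf x y = (if x \<ge> y then (y+1)/(2*(x+1)) else 1 - (x+1)/(2*(y+1)))"

definition RX :: "real \<Rightarrow> real \<Rightarrow> real" where
  "RX x y = Rf x y * Pf x y"

definition Rstar :: "real \<Rightarrow> real \<Rightarrow> real" where
  "Rstar x y = (if x > 0 \<or> y > 0 then max (x/y) (y/x) else 1)"

definition Pstar :: "real \<Rightarrow> real \<Rightarrow> real" where
  "Pstar x y = (if x > 0 \<or> y > 0 then (if x \<ge> y then y/(2*x) else 1 - x/(2*y)) else 1/2)"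

definition RstarX :: "real \<Rightarrow> real \<Rightarrow> real" where
  "RstarX x y = (if y > 0 then Rstar x y * Pstar x y else 1/2)"

text \<open>The space E: non-decreasing cadlag functions on [0,1] with f 0 = 0, represented
  by their canonical extension to the real line (constant f 0 left of 0, f 1 right of 1).\<close>
definition E :: "(real \<Rightarrow> real) set" where
  "E = {f. f 0 = 0 \<and> mono_on {0..1} f
          \<and> (\<forall>x. x < 0 \<longrightarrow> f x = f 0) \<and> (\<forall>x. x > 1 \<longrightarrow> f x = f 1)
          \<and> (\<forall>x\<in>{0..<1}. continuous (at_right x) f)
          \<and> (\<forall>x\<in>{0<..1}. \<exists>l. (f \<longlongrightarrow> l) (at_left x))}"

definition levy :: "(real \<Rightarrow> real) \<Rightarrow> (real \<Rightarrow> real) \<Rightarrow> real" where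
  "levy f g = Inf {r. r > 0 \<and> (\<forall>x\<in>{-r..1+r}. f (x - r) - r < g x \<and> g x < f (x + r) + r)}"

definition levy2 :: "path2 \<Rightarrow> path2 \<Rightarrow> real" where
  "levy2 f g = max (levy (fst f) (fst g)) (levy (snd f) (snd g))"

definition G :: "real \<Rightarrow> (real \<Rightarrow> real) set" where
  "G M = {f \<in> E. \<forall>s\<in>{0..1}. s / M \<le> f s \<and> f s \<le> M * s}"

definition GT :: "real \<Rightarrow> real \<Rightarrow> (real \<Rightarrow> real) set" where
  "GT M T = {f \<in> E. \<forall>s\<in>{0..1}. s / M - 2 * T powr (-2/3) \<le> f s
                                  \<and> f s \<le> M * (s + 2 * T powr (-2/3))}"

definition PL :: "nat \<Rightarrow> (real \<Rightarrow> real) set" where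
  "PL n = {f \<in> E. continuous_on {0..1} f \<and>
             (\<forall>i<n. \<exists>a b. \<forall>x\<in>{real i / n .. (real i + 1) / n}. f x = a + b * x)}"

definition Ij :: "nat \<Rightarrow> nat \<Rightarrow> real set" where
  "Ij n j = {real j / n .. (real j + 1) / n}"

definition Delta :: "nat \<Rightarrow> path2 \<Rightarrow> path2 \<Rightarrow> real" where
  "Delta n f g = Max ((\<lambda>i. max \<bar>fst f (real i / n) - fst g (real i / n)\<bar>
                                \<bar>snd f (real i / n) - snd g (real i / n)\<bar>) ` {0..n})"

definition Gamma :: "real \<Rightarrow> real \<Rightarrow> path2 \<Rightarrow> nat \<Rightarrow> path2 set" where
  "Gamma M T f n = {g. Delta n f g < 1 / (real n)^2 \<and> levy2 f g < 1 / real n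
                       \<and> g \<in> GT M T \<times> GT M T}"

definition RXminus :: "real set \<Rightarrow> path2 set \<Rightarrow> real \<Rightarrow> real" where
  "RXminus I F T = Inf {RX (T * fst g s) (T * snd g s) | s g. s \<in> I \<and> g \<in> F}"

definition RXplus :: "real set \<Rightarrow> path2 set \<Rightarrow> real \<Rightarrow> real" where
  "RXplus I F T = Sup {RX (T * fst g s) (T * snd g s) | s g. s \<in> I \<and> g \<in> F}"

definition xminus :: "real \<Rightarrow> path2 set \<Rightarrow> real" where
  "xminus s F = Inf {fst g s | g. g \<in> F}"

definition xplus :: "real \<Rightarrow> path2 set \<Rightarrow> real" where
  "xplus s F = Sup {fst g s | g. g \<in> F}"

definition EplusX :: "real set \<Rightarrow> path2 set \<Rightarrow> real \<Rightarrow> real" where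
  "EplusX I F T =
    (let a = Inf I; b = Sup I; L = b - a in
     if 2 * RXminus I F T * L > xplus b F - xminus a F
       then (sqrt (2 * RXminus I F T * L) - sqrt (xplus b F - xminus a F))^2
     else if xminus b F - xplus a F > 2 * RXplus I F T * L
       then (sqrt (2 * RXplus I F T * L) - sqrt (xminus b F - xplus a F))^2
     else 0)"

text \<open>Derivative; at the (Lebesgue-null) set of non-differentiability points the paper
  uses the value infinity, here we use 0 (does not affect the integral).\<close>
definition dX :: "(real \<Rightarrow> real) \<Rightarrow> real \<Rightarrow> real" where
  "dX f s = (if f differentiable (at s) then deriv f s else 0)"

end

theory Submission
  imports Defs
begin

(* On the cell I_j = [j/n, (j+1)/n] the path f_X is affine with slope n dx, where dx and dy are
   the increments of f_X and f_Y over the cell, and every g in Gamma_{M,T}(f,n) is within 1/n^2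
   of f at the grid points, hence, being monotone, inside a small box around f on the whole cell.
   Both R_X(T g(s)) and R*_X(f(s)) are of the form max(1/2, ratio - 1/2) with the ratio taken over
   this box.  Since j >= sqrt n the box stays away from the axes, so all these values lie in one
   interval of length O(M^3 n^(1/2) (dx + dy + 1/n^2 + 1/T)).  Therefore E+_X(I_j) = (sqrt x' - sqrt y')^2
   with x' close to 2 R*_X(f(s)) / n and y' close to dx, and a perturbation estimate for
   (sqrt x - sqrt y)^2 bounds the integral over I_j by E+_X(I_j) plus an error that is affine in
   dx and dy.  Summed over the cells, the increments telescope to at most 2M. *)

lemma RX_eq_max_ratio:
  assumes "x > -1" "y > -1"
  shows "RX x y = max (1/2) ((y + 1) / (x + 1) - 1/2)"
proof (cases "x \<ge> y")
  case True
  then have r: "(y + 1) / (x + 1) \<le> 1" "(x + 1) / (y + 1) \<ge> 1"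
    using assms by auto
  have "Rf x y = (x + 1) / (y + 1)"
    unfolding Rf_def using r by (intro max_absorb1) linarith
  then have "RX x y = (x + 1) / (y + 1) * ((y + 1) / (2 * (x + 1)))"
    unfolding RX_def Pf_def using True by simp
  also have "\<dots> = 1/2"
    using assms by simp
  also have "\<dots> = max (1/2) ((y + 1) / (x + 1) - 1/2)"
    using r by (intro max_absorb1[symmetric]) linarith
  finally show ?thesis .
next
  case False
  then have r: "(y + 1) / (x + 1) \<ge> 1" "(x + 1) / (y + 1) \<le> 1"
    using assms by auto
  have "Rf x y = (y + 1) / (x + 1)"
    unfolding Rf_def using r by (intro max_absorb2) linarith
  then have "RX x y = (y + 1) / (x + 1) * (1 - (x + 1) / (2 * (y + 1)))"
    unfolding RX_def Pf_def using False by simp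
  also have "\<dots> = (y + 1) / (x + 1) - 1/2"
    using assms by (simp add: right_diff_distrib)
  also have "\<dots> = max (1/2) ((y + 1) / (x + 1) - 1/2)"
    using r by (intro max_absorb2[symmetric]) linarith
  finally show ?thesis .
qed

lemma RstarX_eq_max_ratio:
  assumes "x > 0" "y > 0"
  shows "RstarX x y = max (1/2) (y / x - 1/2)"
proof (cases "x \<ge> y")
  case True
  then have r: "y / x \<le> 1" "x / y \<ge> 1"
    using assms by auto
  have "max (x / y) (y / x) = x / y"
    using r by (intro max_absorb1) linarith
  then have "RstarX x y = x / y * (y / (2 * x))"
    unfolding RstarX_def Rstar_def Pstar_def using True assms by simp
  also have "\<dots> = 1/2"
    using assms by simp
  also have "\<dots> = max (1/2) (y / x - 1/2)"
    using r by (intro max_absorb1[symmetric]) linarith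
  finally show ?thesis .
next
  case False
  then have r: "y / x \<ge> 1" "x / y \<le> 1"
    using assms by auto
  have "max (x / y) (y / x) = y / x"
    using r by (intro max_absorb2) linarith
  then have "RstarX x y = y / x * (1 - x / (2 * y))"
    unfolding RstarX_def Rstar_def Pstar_def using False assms by simp
  also have "\<dots> = y / x - 1/2"
    using assms by (simp add: right_diff_distrib)
  also have "\<dots> = max (1/2) (y / x - 1/2)"
    using r by (intro max_absorb2[symmetric]) linarith
  finally show ?thesis .
qed

lemma ratio_shift_bounds:
  fixes X Y t \<tau> :: real
  assumes "0 < xlo" "xlo \<le> X" "X \<le> xhi" "0 \<le> ylo" "ylo \<le> Y" "Y \<le> yhi" "0 \<le> t" "t \<le> \<tau>"
  shows "ylo / (xhi + \<tau>) \<le> (Y + t) / (X + t)" "(Y + t) / (X + t) \<le> (yhi + \<tau>) / xlo"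
proof -
  have "ylo / (xhi + \<tau>) \<le> Y / (X + t)"
    using assms by (intro frac_le) auto
  also have "\<dots> \<le> (Y + t) / (X + t)"
    using assms by (intro divide_right_mono) auto
  finally show "ylo / (xhi + \<tau>) \<le> (Y + t) / (X + t)" .
  have "(Y + t) / (X + t) \<le> (Y + t) / X"
    using assms by (intro divide_left_mono) auto
  also have "\<dots> \<le> (yhi + \<tau>) / xlo"
    using assms by (intro frac_le) auto
  finally show "(Y + t) / (X + t) \<le> (yhi + \<tau>) / xlo" .
qed

lemma ratio_box_width:
  fixes \<kappa> \<tau> :: real
  assumes "0 < xlo" "xlo \<le> xhi" "0 \<le> ylo" "ylo \<le> yhi" "0 \<le> \<tau>"
    and "1 / xlo \<le> \<kappa>" "ylo / xlo^2 \<le> \<kappa>"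
  shows "(yhi + \<tau>) / xlo - ylo / (xhi + \<tau>) \<le> \<kappa> * ((xhi - xlo) + (yhi - ylo) + 2 * \<tau>)"
proof -
  have pos: "0 < xhi + \<tau>"
    using assms by linarith
  have "(yhi + \<tau>) / xlo - ylo / (xhi + \<tau>)
      = 1 / xlo * (yhi - ylo + \<tau>) + ylo * (xhi + \<tau> - xlo) / (xlo * (xhi + \<tau>))"
    using assms pos by (simp add: divide_simps) (simp add: algebra_simps)
  also have "\<dots> \<le> \<kappa> * (yhi - ylo + \<tau>) + ylo / xlo^2 * (xhi + \<tau> - xlo)"
  proof (rule add_mono)
    show "1 / xlo * (yhi - ylo + \<tau>) \<le> \<kappa> * (yhi - ylo + \<tau>)"
      using assms by (intro mult_right_mono) auto
    have "ylo * (xhi + \<tau> - xlo) / (xlo * (xhi + \<tau>)) \<le> ylo * (xhi + \<tau> - xlo) / (xlo * xlo)"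
      using assms by (intro divide_left_mono mult_left_mono mult_nonneg_nonneg) auto
    then show "ylo * (xhi + \<tau> - xlo) / (xlo * (xhi + \<tau>)) \<le> ylo / xlo^2 * (xhi + \<tau> - xlo)"
      by (simp add: power2_eq_square)
  qed
  also have "\<dots> \<le> \<kappa> * (yhi - ylo + \<tau>) + \<kappa> * (xhi + \<tau> - xlo)"
    using assms by (intro add_left_mono mult_right_mono) auto
  finally show ?thesis
    by (simp add: algebra_simps)
qed

lemma sqrt_diff_sq_perturb:
  fixes x y x' y' w :: real
  assumes "0 \<le> x" "0 \<le> y" "0 \<le> x'" "0 \<le> y'" "0 < w"
  shows "(sqrt x - sqrt y)^2 \<le> (sqrt x' - sqrt y')^2 + (1 + w) * \<bar>x - x'\<bar> + \<bar>y - y'\<bar>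
           + 2 * sqrt (x * \<bar>y - y'\<bar>) + y' / w"
proof -
  have "x' * y' = x * y + x * (y' - y) + y' * (x' - x)"
    by (simp add: algebra_simps)
  also have "\<dots> \<le> x * y + x * \<bar>y - y'\<bar> + y' * \<bar>x - x'\<bar>"
    using assms by (intro add_mono mult_left_mono) auto
  finally have "sqrt (x' * y') \<le> sqrt (x * y + x * \<bar>y - y'\<bar> + y' * \<bar>x - x'\<bar>)"
    by simp
  also have "\<dots> \<le> sqrt (x * y) + sqrt (x * \<bar>y - y'\<bar>) + sqrt (y' * \<bar>x - x'\<bar>)"
    using assms by (smt (verit) mult_nonneg_nonneg abs_ge_zero sqrt_add_le_add_sqrt)
  finally have cross: "sqrt (x' * y') \<le> sqrt (x * y) + sqrt (x * \<bar>y - y'\<bar>) + sqrt (y' * \<bar>x - x'\<bar>)" .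
  have amgm: "2 * sqrt (y' * \<bar>x - x'\<bar>) \<le> y' / w + w * \<bar>x - x'\<bar>"
  proof -
    have "sqrt (y' * \<bar>x - x'\<bar>) = sqrt ((y' / w) * (w * \<bar>x - x'\<bar>))"
      using assms by simp
    also have "\<dots> \<le> (y' / w + w * \<bar>x - x'\<bar>) / 2"
      using assms by (intro arith_geo_mean_sqrt) auto
    finally show ?thesis by simp
  qed
  have "(sqrt x - sqrt y)^2 = x + y - 2 * sqrt (x * y)"
    "(sqrt x' - sqrt y')^2 = x' + y' - 2 * sqrt (x' * y')"
    using assms by (simp_all add: power2_diff real_sqrt_mult)
  then show ?thesis
    using cross amgm by (simp add: algebra_simps)
qed

lemma Inf_Sup_within_bounds:
  fixes S :: "real set"
  assumes "a \<in> S" "\<And>x. x \<in> S \<Longrightarrow> lo \<le> x \<and> x \<le> hi"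
  shows "lo \<le> Inf S" "Sup S \<le> hi" "Inf S \<le> a" "a \<le> Sup S"
proof -
  have "bdd_below S" "bdd_above S"
    using assms(2) by (auto intro!: bdd_belowI[of _ lo] bdd_aboveI[of _ hi])
  then show "Inf S \<le> a" "a \<le> Sup S"
    using assms(1) by (auto intro: cInf_lower cSup_upper)
  show "lo \<le> Inf S" "Sup S \<le> hi"
    using assms by (auto intro!: cInf_greatest cSup_least)
qed

lemma EplusX_nonneg: "EplusX I F T \<ge> 0"
  unfolding EplusX_def Let_def by auto

lemma EplusX_as_sqrt_diff_sq:
  fixes u v T :: real and F :: "path2 set"
  defines "rm \<equiv> RXminus {u..v} F T" and "rp \<equiv> RXplus {u..v} F T"
    and "A \<equiv> xplus v F - xminus u F" and "B \<equiv> xminus v F - xplus u F"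
  assumes uv: "u < v" and rm: "0 \<le> rm" and rmp: "rm \<le> rp" and BA: "B \<le> A" and A: "0 \<le> A"
  obtains x y where "EplusX {u..v} F T = (sqrt x - sqrt y)^2"
    "2 * rm * (v - u) \<le> x" "x \<le> 2 * rp * (v - u)" "B \<le> y" "y \<le> A" "0 \<le> y"
proof -
  define xm xp where "xm = 2 * rm * (v - u)" and "xp = 2 * rp * (v - u)"
  have "Inf {u..v} = u" "Sup {u..v} = v"
    using uv by auto
  then have E: "EplusX {u..v} F T = (if xm > A then (sqrt xm - sqrt A)^2
      else if B > xp then (sqrt xp - sqrt B)^2 else 0)"
    unfolding EplusX_def Let_def xm_def xp_def rm_def rp_def A_def B_def by simp
  have "0 \<le> xm" "xm \<le> xp"
    unfolding xm_def xp_def using uv rm rmp by (auto intro: mult_right_mono)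
  then consider "xm > A" | "\<not> xm > A" "B > xp" | "\<not> xm > A" "\<not> B > xp"
    by blast
  then show ?thesis
  proof cases
    case 1
    then have "EplusX {u..v} F T = (sqrt xm - sqrt A)^2"
      using E by simp
    then show ?thesis
      using BA A \<open>xm \<le> xp\<close> by (intro that[of xm A]) (simp_all add: xm_def xp_def)
  next
    case 2
    then have "EplusX {u..v} F T = (sqrt xp - sqrt B)^2" "0 \<le> B"
      using E \<open>0 \<le> xm\<close> \<open>xm \<le> xp\<close> by simp_all
    then show ?thesis
      using 2 BA \<open>xm \<le> xp\<close> by (intro that[of xp B]) (simp_all add: xm_def xp_def)
  next
    case 3
    define z where "z = max xm B"
    have "EplusX {u..v} F T = (sqrt z - sqrt z)^2"
      using E 3 by simp
    moreover have "xm \<le> z" "z \<le> xp" "B \<le> z" "z \<le> A" "0 \<le> z"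
      using 3 \<open>0 \<le> xm\<close> \<open>xm \<le> xp\<close> BA unfolding z_def by auto
    ultimately show ?thesis
      using that[of z z] unfolding xm_def xp_def by blast
  qed
qed

lemma xminus_xplus_bounds:
  assumes "g0 \<in> F" "\<And>g. g \<in> F \<Longrightarrow> \<bar>fst g s - a\<bar> \<le> e"
  shows "a - e \<le> xminus s F" "xplus s F \<le> a + e" "xminus s F \<le> fst g0 s" "fst g0 s \<le> xplus s F"
proof -
  have mem: "fst g0 s \<in> {fst g s | g. g \<in> F}"
    using assms(1) by blast
  have bound: "a - e \<le> r \<and> r \<le> a + e" if r: "r \<in> {fst g s | g. g \<in> F}" for r
  proof -
    obtain g where "g \<in> F" "r = fst g s"
      using r by blast
    then show ?thesis
      using assms(2)[of g] by auto
  qed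
  show "a - e \<le> xminus s F" "xplus s F \<le> a + e" "xminus s F \<le> fst g0 s" "fst g0 s \<le> xplus s F"
    unfolding xminus_def xplus_def using Inf_Sup_within_bounds[OF mem bound] by auto
qed

lemma RXminus_RXplus_bounds:
  assumes "s0 \<in> I" "g0 \<in> F"
    and "\<And>g s. g \<in> F \<Longrightarrow> s \<in> I \<Longrightarrow>
      Rl \<le> RX (T * fst g s) (T * snd g s) \<and> RX (T * fst g s) (T * snd g s) \<le> Rh"
  shows "Rl \<le> RXminus I F T" "RXplus I F T \<le> Rh" "RXminus I F T \<le> RXplus I F T"
proof -
  let ?S = "{RX (T * fst g s) (T * snd g s) | s g. s \<in> I \<and> g \<in> F}"
  have mem: "RX (T * fst g0 s0) (T * snd g0 s0) \<in> ?S"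
    using assms(1,2) by blast
  have bound: "Rl \<le> r \<and> r \<le> Rh" if "r \<in> ?S" for r
    using that assms(3) by blast
  show "Rl \<le> RXminus I F T" "RXplus I F T \<le> Rh" "RXminus I F T \<le> RXplus I F T"
    unfolding RXminus_def RXplus_def using Inf_Sup_within_bounds[OF mem bound] by auto
qed

(* The witness g0 is needed: Inf and Sup of an empty set of reals are junk values. *)
lemma EplusX_sqrt_diff_sq_approx:
  fixes u v a b e Rl Rh :: real
  assumes "u < v" "g0 \<in> F" "fst g0 u \<le> fst g0 v" "0 \<le> Rl"
    and "\<And>g s. g \<in> F \<Longrightarrow> s \<in> {u..v} \<Longrightarrow>
      Rl \<le> RX (T * fst g s) (T * snd g s) \<and> RX (T * fst g s) (T * snd g s) \<le> Rh"
    and "\<And>g. g \<in> F \<Longrightarrow> \<bar>fst g u - a\<bar> \<le> e \<and> \<bar>fst g v - b\<bar> \<le> e"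
  obtains x y where "EplusX {u..v} F T = (sqrt x - sqrt y)^2"
    "2 * Rl * (v - u) \<le> x" "x \<le> 2 * Rh * (v - u)" "\<bar>y - (b - a)\<bar> \<le> 2 * e" "0 \<le> y"
proof -
  have R: "Rl \<le> RXminus {u..v} F T" "RXplus {u..v} F T \<le> Rh" "RXminus {u..v} F T \<le> RXplus {u..v} F T"
    using RXminus_RXplus_bounds[of u "{u..v}", OF _ assms(2,5)] assms(1) by auto
  have U: "a - e \<le> xminus u F" "xplus u F \<le> a + e" "xminus u F \<le> fst g0 u" "fst g0 u \<le> xplus u F"
    using assms(2,6) by (intro xminus_xplus_bounds; blast)+
  have V: "b - e \<le> xminus v F" "xplus v F \<le> b + e" "xminus v F \<le> fst g0 v" "fst g0 v \<le> xplus v F"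
    using assms(2,6) by (intro xminus_xplus_bounds; blast)+
  have "0 \<le> RXminus {u..v} F T" "xminus v F - xplus u F \<le> xplus v F - xminus u F"
    "0 \<le> xplus v F - xminus u F"
    using R U V assms(3,4) by linarith+
  then obtain x y where "EplusX {u..v} F T = (sqrt x - sqrt y)^2"
    "2 * RXminus {u..v} F T * (v - u) \<le> x" "x \<le> 2 * RXplus {u..v} F T * (v - u)"
    "xminus v F - xplus u F \<le> y" "y \<le> xplus v F - xminus u F" "0 \<le> y"
    using EplusX_as_sqrt_diff_sq[of u v F T] R(3) assms(1) by metis
  moreover have "2 * Rl * (v - u) \<le> 2 * RXminus {u..v} F T * (v - u)"
    "2 * RXplus {u..v} F T * (v - u) \<le> 2 * Rh * (v - u)"
    using R assms(1) by (auto intro: mult_right_mono)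
  ultimately show ?thesis
    using that U V by (smt (verit))
qed

lemma E_mono:
  assumes "f \<in> E" "x \<le> y"
  shows "f x \<le> f y"
proof -
  have E: "mono_on {0..1} f" "\<And>t. t < 0 \<Longrightarrow> f t = f 0" "\<And>t. t > 1 \<Longrightarrow> f t = f 1"
    using assms(1) unfolding E_def by auto
  have clamp: "f t = f (max 0 (min 1 t))" for t
  proof -
    consider "t < 0" | "t > 1" | "t \<in> {0..1}"
      by fastforce
    then show ?thesis
      by cases (simp_all add: E(2,3))
  qed
  have "f (max 0 (min 1 x)) \<le> f (max 0 (min 1 y))"
    using assms(2) by (intro mono_onD[OF E(1)]) auto
  then show ?thesis
    using clamp by metis
qed

lemma levy_self_le:
  assumes "f \<in> E" "r > 0"
  shows "levy f f \<le> r"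
  unfolding levy_def
proof (rule cInf_lower)
  have "f (x - r) - r < f x \<and> f x < f (x + r) + r" for x
    using E_mono[OF assms(1), of "x - r" x] E_mono[OF assms(1), of x "x + r"] assms(2) by auto
  then show "r \<in> {r. r > 0 \<and> (\<forall>x\<in>{-r..1+r}. f (x - r) - r < f x \<and> f x < f (x + r) + r)}"
    using assms(2) by blast
qed (auto intro: bdd_belowI[of _ 0])

lemma Delta_self: "Delta n f f = 0"
proof -
  have "(\<lambda>i. max \<bar>fst f (real i / real n) - fst f (real i / real n)\<bar>
       \<bar>snd f (real i / real n) - snd f (real i / real n)\<bar>) ` {0..n} = {0}"
    by auto
  then show ?thesis
    unfolding Delta_def by simp
qed

lemma G_bounds:
  assumes "h \<in> G M" "s \<in> {0..1}"
  shows "s / M \<le> h s \<and> h s \<le> M * s"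
  using assms unfolding G_def by blast

lemma G_increment_le:
  assumes "h \<in> G M" "0 < M" "0 \<le> a" "a \<le> b" "b \<le> 1"
  shows "h b - h a \<le> M"
proof -
  have "h b \<le> M * b" "a / M \<le> h a"
    using G_bounds[OF assms(1), of a] G_bounds[OF assms(1), of b] assms by auto
  moreover have "M * b \<le> M" "0 \<le> a / M"
    using assms by auto
  ultimately show ?thesis
    by linarith
qed

lemma G_subset_GT:
  assumes "M > 0"
  shows "G M \<subseteq> GT M T"
proof
  fix h assume h: "h \<in> G M"
  have "s / M - 2 * T powr (-2/3) \<le> h s \<and> h s \<le> M * (s + 2 * T powr (-2/3))"
    if "s \<in> {0..1}" for s
  proof -
    have "s / M \<le> h s" "h s \<le> M * s"
      using h that unfolding G_def by auto
    moreover have "0 \<le> T powr (-2/3)" "0 \<le> M * (2 * T powr (-2/3))"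
      using assms by simp_all
    ultimately show ?thesis
      unfolding distrib_left by linarith
  qed
  then show "h \<in> GT M T"
    using h unfolding G_def GT_def by blast
qed

lemma self_mem_Gamma:
  assumes "n > 0" "M > 0" "fst f \<in> G M" "snd f \<in> G M"
  shows "f \<in> Gamma M T f n"
proof -
  have "fst f \<in> E" "snd f \<in> E"
    using assms unfolding G_def by auto
  then have "levy (fst f) (fst f) \<le> 1 / (2 * real n)" "levy (snd f) (snd f) \<le> 1 / (2 * real n)"
    using assms(1) by (auto intro: levy_self_le)
  moreover have "1 / (2 * real n) < 1 / real n"
    using assms(1) by (simp add: field_simps)
  ultimately have "levy2 f f < 1 / real n"
    unfolding levy2_def by linarith
  then show ?thesis
    using G_subset_GT[OF assms(2), of T] assms unfolding Gamma_def
    by (auto simp: Delta_self mem_Times_iff)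
qed

lemma Gamma_E:
  assumes "g \<in> Gamma M T f n"
  shows "fst g \<in> E" "snd g \<in> E"
  using assms unfolding Gamma_def GT_def by auto

lemma Gamma_close_at_grid:
  assumes "g \<in> Gamma M T f n" "i \<le> n"
  shows "\<bar>fst g (real i / n) - fst f (real i / n)\<bar> < 1 / (real n)^2"
    "\<bar>snd g (real i / n) - snd f (real i / n)\<bar> < 1 / (real n)^2"
proof -
  let ?d = "\<lambda>i. max \<bar>fst f (real i / n) - fst g (real i / n)\<bar> \<bar>snd f (real i / n) - snd g (real i / n)\<bar>"
  have "?d i \<le> Delta n f g"
    unfolding Delta_def using assms(2) by (intro Max_ge) auto
  then show "\<bar>fst g (real i / n) - fst f (real i / n)\<bar> < 1 / (real n)^2"
    "\<bar>snd g (real i / n) - snd f (real i / n)\<bar> < 1 / (real n)^2"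
    using assms(1) unfolding Gamma_def by auto
qed

lemma dX_affine:
  assumes "\<forall>x\<in>{a..b}. h x = \<alpha> + \<beta> * x" "a < s" "s < b"
  shows "dX h s = \<beta>"
proof -
  have "((\<lambda>x. \<alpha> + \<beta> * x) has_field_derivative \<beta>) (at s)"
    by (auto intro!: derivative_eq_intros)
  then have "(h has_field_derivative \<beta>) (at s)"
    by (rule has_field_derivative_transform_within_open[of _ _ _ "{a<..<b}"]) (use assms in auto)
  then show ?thesis
    unfolding dX_def by (auto simp: DERIV_imp_deriv real_differentiable_def)
qed

lemma integral_consecutive_sum:
  fixes a :: "nat \<Rightarrow> real" and h :: "real \<Rightarrow> real"
  assumes "mono a" "k \<le> K" "h integrable_on {a k..a K}"
  shows "integral {a k..a K} h = (\<Sum>j\<in>{k..<K}. integral {a j..a (Suc j)} h)"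
  using assms(2,3)
proof (induction K rule: dec_induct)
  case (step m)
  have "a k \<le> a m" "a m \<le> a (Suc m)"
    using step.hyps assms(1) by (auto intro: monoD)
  moreover have "h integrable_on {a k..a m}"
    using step.prems by (rule integrable_subinterval_real) (use calculation in auto)
  ultimately show ?case
    using step Henstock_Kurzweil_Integration.integral_combine[of "a k" "a m" "a (Suc m)" h] by simp
qed simp

definition cell_error :: "real \<Rightarrow> real \<Rightarrow> nat \<Rightarrow> real \<Rightarrow> path2 \<Rightarrow> nat \<Rightarrow> real" where
  "cell_error M T n w f j = 100 * M^3 / w *
     (fst f ((real j + 1) / n) - fst f (real j / n) + (snd f ((real j + 1) / n) - snd f (real j / n))
      + 1 / n + 1 / T)"

lemma cell_error_weights:
  fixes M w N :: real
  defines "Q \<equiv> M^3 / w"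
  assumes "1 \<le> M" "1 \<le> w" "w \<le> N"
  shows "(1 + w) * (8 * M^3 / w^2) \<le> 16 * Q" "1 / N^2 \<le> Q / N" "M / (N * w^2) \<le> Q / N"
    "1 / N^2 / w \<le> Q / N" "1 / w \<le> Q" "0 \<le> Q"
proof -
  have "w^1 \<le> w^2" "M^1 \<le> M^3"
    using assms(2,3) by (intro power_increasing; simp)+
  then have w: "0 < w" "1 \<le> N" "w \<le> w^2" and M: "M \<le> M^3" "1 \<le> M^3"
    using assms(2-4) by auto
  have Q: "1 / w \<le> Q" "0 \<le> Q"
    unfolding Q_def using w M assms(2) by (auto intro: divide_right_mono)
  then show "1 / w \<le> Q" "0 \<le> Q"
    by auto
  have "(1 + w) * (8 * M^3 / w^2) = 8 * Q * ((1 + w) / w)"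
    unfolding Q_def using w by (simp add: power2_eq_square field_simps)
  also have "\<dots> \<le> 8 * Q * 2"
    using w Q assms(3) by (intro mult_left_mono) (auto simp: field_simps)
  finally show "(1 + w) * (8 * M^3 / w^2) \<le> 16 * Q"
    by simp
  have "1 / N \<le> 1 / w"
    using w assms(4) by (intro divide_left_mono) auto
  then have "1 / N / N \<le> Q / N"
    using Q w by (intro divide_right_mono) auto
  then show *: "1 / N^2 \<le> Q / N"
    by (simp add: power2_eq_square)
  have "1 / N^2 / w = 1 / N^2 * (1 / w)"
    by simp
  also have "\<dots> \<le> 1 / N^2 * 1"
    using assms(3) by (intro mult_left_mono) auto
  finally have "1 / N^2 / w \<le> 1 / N^2"
    by simp
  with * show "1 / N^2 / w \<le> Q / N"
    by linarith
  have "M / w^2 \<le> M / w"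
    using w assms(2) by (intro divide_left_mono) auto
  also have "\<dots> \<le> Q"
    unfolding Q_def using w M by (intro divide_right_mono) auto
  finally show "M / (N * w^2) \<le> Q / N"
    using w by (simp add: field_simps)
qed

lemma cell_error_arith:
  fixes M w N T dx dy :: real
  assumes "1 \<le> M" "1 \<le> w" "N = w^4" "0 < T" "0 \<le> dx" "0 \<le> dy"
  shows "(1 + w) * (8 * M^3 / w^2 * (dx + dy + 4 / N^2 + 2 / T)) + 2 / N^2 + 4 * M / (N * w^2)
      + (dx + 2 / N^2) / w \<le> 100 * M^3 / w * (dx + dy + 1 / N + 1 / T)"
proof -
  define Q where "Q = M^3 / w"
  have "w^1 \<le> w^4"
    using assms(2) by (intro power_increasing) auto
  then have N: "w \<le> N" "0 < N"
    using assms(2,3) by auto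
  note weights = cell_error_weights[OF assms(1,2) N(1), folded Q_def]
  have "0 \<le> dx + dy + 4 / N^2 + 2 / T"
    using assms(4-6) by simp
  then have "(1 + w) * (8 * M^3 / w^2) * (dx + dy + 4 / N^2 + 2 / T)
      \<le> 16 * Q * (dx + dy + 4 / N^2 + 2 / T)"
    by (rule mult_right_mono[OF weights(1)])
  then have "(1 + w) * (8 * M^3 / w^2 * (dx + dy + 4 / N^2 + 2 / T))
      \<le> 16 * Q * (dx + dy + 4 / N^2 + 2 / T)"
    by (simp only: mult.assoc)
  moreover have "16 * Q * (dx + dy + 4 / N^2 + 2 / T) = 16 * Q * dx + 16 * Q * dy + 64 * (Q / N^2) + 32 * (Q / T)"
    by (simp add: algebra_simps)
  moreover have "Q / N^2 \<le> Q / N"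
    using N assms(2) weights(6) by (intro divide_left_mono) (auto simp: power2_eq_square)
  moreover have "dx / w \<le> Q * dx"
    using weights(5) assms(5) by (metis mult_right_mono times_divide_eq_left mult_1 mult.commute)
  moreover have "0 \<le> Q * dx" "0 \<le> Q * dy" "0 \<le> Q / N" "0 \<le> Q / T"
    using weights(6) N assms(4-6) by simp_all
  moreover have "(dx + 2 / N^2) / w = dx / w + 2 * (1 / N^2 / w)"
    "4 * M / (N * w^2) = 4 * (M / (N * w^2))"
    "100 * M^3 / w * (dx + dy + 1 / N + 1 / T) = 100 * (Q * dx) + 100 * (Q * dy) + 100 * (Q / N) + 100 * (Q / T)"
    unfolding Q_def using N assms(2,4) by (simp_all add: field_simps)
  ultimately show ?thesis
    using weights(2-4) by (simp only:) linarith
qed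

locale grid_cell =
  fixes M T :: real and n j :: nat and f :: path2 and w :: real
  assumes M_gt_1: "1 < M" and T_gt_1: "1 < T" and n_ge: "2 * M \<le> real n"
    and f_PL: "fst f \<in> PL n" and f_G: "fst f \<in> G M" "snd f \<in> G M"
    and j_lt_n: "j < n" and w_pow4: "w^4 = real n" and w_ge_1: "1 \<le> w" and w_sq_le_j: "w^2 \<le> real j"
begin

abbreviation s0 :: real where "s0 \<equiv> real j / real n"
abbreviation s1 :: real where "s1 \<equiv> (real j + 1) / real n"
abbreviation \<Gamma> :: "path2 set" where "\<Gamma> \<equiv> Gamma M T f n"
abbreviation \<delta> :: real where "\<delta> \<equiv> 1 / (real n)^2"
abbreviation dx :: real where "dx \<equiv> fst f s1 - fst f s0"
abbreviation dy :: real where "dy \<equiv> snd f s1 - snd f s0"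
abbreviation xlo :: real where "xlo \<equiv> fst f s0 - \<delta>"
abbreviation xhi :: real where "xhi \<equiv> fst f s1 + \<delta>"
abbreviation ylo :: real where "ylo \<equiv> snd f s0 - \<delta>"
abbreviation yhi :: real where "yhi \<equiv> snd f s1 + \<delta>"
abbreviation \<kappa> :: real where "\<kappa> \<equiv> 4 * M^3 * real n / w^2"
definition Rlo :: real where "Rlo = max (1/2) (ylo / (xhi + 1 / T) - 1/2)"
definition Rhi :: real where "Rhi = max (1/2) ((yhi + 1 / T) / xlo - 1/2)"

lemma n_pos: "0 < real n"
  using M_gt_1 n_ge by linarith

lemma j_ge_1: "1 \<le> real j"
  using w_ge_1 w_sq_le_j one_le_power[of w 2] by linarith

lemma cell_geometry: "0 < s0" "s0 < s1" "s1 \<le> 1" "s1 - s0 = 1 / real n" "Ij n j = {s0..s1}"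
  using n_pos j_ge_1 j_lt_n by (auto simp: Ij_def field_simps)

lemma f_E: "fst f \<in> E" "snd f \<in> E"
  using f_G unfolding G_def by auto

lemma f_mem_Gamma: "f \<in> \<Gamma>"
  using M_gt_1 j_lt_n f_G by (intro self_mem_Gamma) auto

lemma f_increments_nonneg: "0 \<le> dx" "0 \<le> dy"
  using E_mono[OF f_E(1)] E_mono[OF f_E(2)] cell_geometry by auto

lemma Gamma_close_at_ends:
  assumes "g \<in> \<Gamma>"
  shows "\<bar>fst g s0 - fst f s0\<bar> \<le> \<delta>" "\<bar>fst g s1 - fst f s1\<bar> \<le> \<delta>"
    "\<bar>snd g s0 - snd f s0\<bar> \<le> \<delta>" "\<bar>snd g s1 - snd f s1\<bar> \<le> \<delta>"
  using Gamma_close_at_grid[OF assms, of j] Gamma_close_at_grid[OF assms, of "Suc j"] j_lt_n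
  by (auto simp: add.commute)

lemma Gamma_in_box:
  assumes "g \<in> \<Gamma>" "s \<in> {s0..s1}"
  shows "xlo \<le> fst g s \<and> fst g s \<le> xhi \<and> ylo \<le> snd g s \<and> snd g s \<le> yhi"
proof -
  have "fst g s0 \<le> fst g s" "fst g s \<le> fst g s1" "snd g s0 \<le> snd g s" "snd g s \<le> snd g s1"
    using E_mono[OF Gamma_E(1)[OF assms(1)]] E_mono[OF Gamma_E(2)[OF assms(1)]] assms(2) by auto
  then show ?thesis
    using Gamma_close_at_ends[OF assms(1)] by auto
qed

lemma box_away_from_axes: "0 < xlo" "0 < ylo" "xlo \<le> xhi" "ylo \<le> yhi" "1 / xlo \<le> \<kappa>" "ylo / xlo^2 \<le> \<kappa>"
proof -
  define c where "c = real j / (2 * real n * M)"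
  have c: "0 < c" "s0 / M = 2 * c"
    unfolding c_def using n_pos j_ge_1 M_gt_1 by auto
  have "2 * M * 1 \<le> real n * real j"
    using n_ge j_ge_1 n_pos by (intro mult_mono) auto
  then have "\<delta> \<le> c"
    unfolding c_def using n_pos M_gt_1 by (simp add: field_simps power2_eq_square)
  moreover have "s0 \<in> {0..1}"
    using cell_geometry by auto
  then have "s0 / M \<le> fst f s0" "s0 / M \<le> snd f s0" "snd f s0 \<le> M * s0"
    using G_bounds[OF f_G(1)] G_bounds[OF f_G(2)] by blast+
  moreover have "0 \<le> \<delta>"
    by simp
  ultimately have lo: "c \<le> xlo" "c \<le> ylo" "ylo \<le> M * s0"
    using c by linarith+
  then show "0 < xlo" "0 < ylo"
    using c by auto
  show "xlo \<le> xhi" "ylo \<le> yhi"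
    using f_increments_nonneg \<open>0 \<le> \<delta>\<close> by linarith+
  have "1 * 1 \<le> M * M"
    using M_gt_1 by (intro mult_mono) auto
  then have "2 * M \<le> 4 * M^3"
    using M_gt_1 by (simp add: power3_eq_cube)
  have "real j \<ge> w^2" "0 < w^2"
    using w_sq_le_j w_ge_1 by auto
  have "1 / xlo \<le> 1 / c"
    using lo c by (intro divide_left_mono) auto
  also have "\<dots> = 2 * M * real n / real j"
    unfolding c_def by simp
  also have "\<dots> \<le> \<kappa>"
    using \<open>2 * M \<le> 4 * M^3\<close> \<open>real j \<ge> w^2\<close> \<open>0 < w^2\<close> n_pos M_gt_1
    by (intro frac_le mult_right_mono) auto
  finally show "1 / xlo \<le> \<kappa>" .
  have "ylo / xlo^2 \<le> M * s0 / c^2"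
    using lo c by (intro frac_le power_mono) auto
  also have "\<dots> = 4 * M^3 * real n / real j"
    unfolding c_def using n_pos j_ge_1 M_gt_1 by (simp add: field_simps power2_eq_square power3_eq_cube)
  also have "\<dots> \<le> \<kappa>"
    using \<open>real j \<ge> w^2\<close> \<open>0 < w^2\<close> n_pos M_gt_1 j_ge_1 by (intro divide_left_mono) auto
  finally show "ylo / xlo^2 \<le> \<kappa>" .
qed

lemma Rlo_ge_half: "1/2 \<le> Rlo"
  unfolding Rlo_def by simp

(* The shift t = 1 / T yields R_X(T g(s)), the shift t = 0 yields R*_X(f(s)). *)
lemma shifted_ratio_in_range:
  assumes "xlo \<le> X" "X \<le> xhi" "ylo \<le> Y" "Y \<le> yhi" "0 \<le> t" "t \<le> 1 / T"
  shows "Rlo \<le> max (1/2) ((Y + t) / (X + t) - 1/2) \<and> max (1/2) ((Y + t) / (X + t) - 1/2) \<le> Rhi"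
  using ratio_shift_bounds[OF box_away_from_axes(1) assms(1,2) less_imp_le[OF box_away_from_axes(2)] assms(3-6)]
  unfolding Rlo_def Rhi_def by (auto intro: max.mono)

lemma RX_in_range:
  assumes "g \<in> \<Gamma>" "s \<in> {s0..s1}"
  shows "Rlo \<le> RX (T * fst g s) (T * snd g s) \<and> RX (T * fst g s) (T * snd g s) \<le> Rhi"
proof -
  have box: "xlo \<le> fst g s" "fst g s \<le> xhi" "ylo \<le> snd g s" "snd g s \<le> yhi"
    using Gamma_in_box[OF assms] by auto
  then have pos: "0 < fst g s" "0 < snd g s"
    using box_away_from_axes(1,2) by linarith+
  then have "RX (T * fst g s) (T * snd g s) = max (1/2) ((T * snd g s + 1) / (T * fst g s + 1) - 1/2)"
    using T_gt_1 by (intro RX_eq_max_ratio) (auto intro: order.strict_trans2[of _ 0])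
  also have "(T * snd g s + 1) / (T * fst g s + 1) = (T * (snd g s + 1 / T)) / (T * (fst g s + 1 / T))"
    using T_gt_1 by (simp add: distrib_left)
  also have "\<dots> = (snd g s + 1 / T) / (fst g s + 1 / T)"
    using T_gt_1 by (intro mult_divide_mult_cancel_left) simp
  finally show ?thesis
    using shifted_ratio_in_range[OF box, of "1 / T"] T_gt_1 by simp
qed

lemma RstarX_in_range:
  assumes "s \<in> {s0..s1}"
  shows "Rlo \<le> RstarX (fst f s) (snd f s) \<and> RstarX (fst f s) (snd f s) \<le> Rhi"
proof -
  have box: "xlo \<le> fst f s" "fst f s \<le> xhi" "ylo \<le> snd f s" "snd f s \<le> yhi"
    using Gamma_in_box[OF f_mem_Gamma assms] by auto
  then have "RstarX (fst f s) (snd f s) = max (1/2) ((snd f s + 0) / (fst f s + 0) - 1/2)"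
    using box_away_from_axes(1,2) by (simp add: RstarX_eq_max_ratio)
  then show ?thesis
    using shifted_ratio_in_range[OF box, of 0] T_gt_1 by simp
qed

lemma Rhi_minus_Rlo_le: "Rhi - Rlo \<le> \<kappa> * (dx + dy + 4 * \<delta> + 2 / T)"
proof -
  have "(yhi + 1 / T) / xlo - ylo / (xhi + 1 / T) \<le> \<kappa> * ((xhi - xlo) + (yhi - ylo) + 2 * (1 / T))"
    using box_away_from_axes T_gt_1 by (intro ratio_box_width) auto
  moreover have "(xhi - xlo) + (yhi - ylo) + 2 * (1 / T) = dx + dy + 4 * \<delta> + 2 / T"
    by simp
  moreover have "0 \<le> \<kappa> * (dx + dy + 4 * \<delta> + 2 / T)"
    using f_increments_nonneg M_gt_1 T_gt_1 by simp
  moreover have "max c a - max c b \<le> max 0 (a - b)" for a b c :: real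
    by (simp add: max_def)
  ultimately show ?thesis
    unfolding Rlo_def Rhi_def by (smt (verit))
qed

lemma EplusX_cell_approx:
  obtains x y where "EplusX (Ij n j) \<Gamma> T = (sqrt x - sqrt y)^2"
    "2 * Rlo / real n \<le> x" "x \<le> 2 * Rhi / real n" "\<bar>y - dx\<bar> \<le> 2 * \<delta>" "0 \<le> y"
proof -
  have "0 \<le> Rlo" "fst f s0 \<le> fst f s1"
    using Rlo_ge_half f_increments_nonneg by auto
  then obtain x y where "EplusX {s0..s1} \<Gamma> T = (sqrt x - sqrt y)^2"
    "2 * Rlo * (s1 - s0) \<le> x" "x \<le> 2 * Rhi * (s1 - s0)" "\<bar>y - dx\<bar> \<le> 2 * \<delta>" "0 \<le> y"
    using EplusX_sqrt_diff_sq_approx[OF cell_geometry(2) f_mem_Gamma, where Rl=Rlo and Rh=Rhi and a="fst f s0" and b="fst f s1" and e=\<delta>]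
      RX_in_range Gamma_close_at_ends by blast
  then show ?thesis
    using that cell_geometry(4,5) by simp
qed

lemma dX_fst_f_eq_slope:
  assumes "s \<in> {s0<..<s1}"
  shows "dX (fst f) s = real n * dx"
proof -
  obtain \<alpha> \<beta> where affine: "\<forall>x\<in>{s0..s1}. fst f x = \<alpha> + \<beta> * x"
    using f_PL j_lt_n unfolding PL_def by blast
  then have "dx = \<beta> * (s1 - s0)"
    using cell_geometry by (simp add: algebra_simps)
  then have "\<beta> = real n * dx"
    using cell_geometry n_pos by simp
  then show ?thesis
    using dX_affine[OF affine] assms by simp
qed

lemma RstarX_le_M_sq:
  assumes "s \<in> {s0<..<s1}"
  shows "RstarX (fst f s) (snd f s) \<le> M^2"
proof -
  have s: "0 < s" "s \<in> {0..1}"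
    using assms cell_geometry by auto
  then have b: "s / M \<le> fst f s" "snd f s \<le> M * s" "s / M \<le> snd f s"
    using G_bounds[OF f_G(1)] G_bounds[OF f_G(2)] by auto
  moreover have "0 < s / M"
    using s M_gt_1 by simp
  ultimately have "snd f s / fst f s \<le> (M * s) / (s / M)"
    by (intro frac_le) auto
  also have "\<dots> = M^2"
    using s M_gt_1 by (simp add: power2_eq_square)
  moreover have "1 \<le> M^2"
    using M_gt_1 by simp
  ultimately show ?thesis
    using b \<open>0 < s / M\<close> by (simp add: RstarX_eq_max_ratio)
qed

lemma integrand_rescale:
  assumes "s \<in> {s0<..<s1}"
  shows "(sqrt (2 * RstarX (fst f s) (snd f s)) - sqrt (dX (fst f) s))^2
    = real n * (sqrt (2 * RstarX (fst f s) (snd f s) / real n) - sqrt dx)^2"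
proof -
  have "sqrt (2 * RstarX (fst f s) (snd f s)) = sqrt (real n) * sqrt (2 * RstarX (fst f s) (snd f s) / real n)"
    using n_pos by (simp add: real_sqrt_mult[symmetric])
  moreover have "sqrt (dX (fst f) s) = sqrt (real n) * sqrt dx"
    using dX_fst_f_eq_slope[OF assms] by (simp add: real_sqrt_mult)
  ultimately show ?thesis
    using n_pos by (simp add: power_mult_distrib right_diff_distrib[symmetric])
qed

lemma sqrt_cross_term_le:
  assumes "0 \<le> x" "x \<le> 2 * M^2 / real n" "\<bar>y\<bar> \<le> 2 * \<delta>"
  shows "2 * sqrt (x * \<bar>y\<bar>) \<le> 4 * M / (real n * w^2)"
proof -
  have "x * \<bar>y\<bar> \<le> 2 * M^2 / real n * (2 * \<delta>)"
    using assms by (intro mult_mono) auto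
  also have "\<dots> = 4 * M^2 / (real n^2 * real n)"
    using n_pos by (simp add: field_simps)
  also have "real n^2 * real n = (real n * w^2)^2"
    using w_pow4 by (simp add: power_mult_distrib flip: power_mult)
  also have "4 * M^2 / (real n * w^2)^2 = (2 * M / (real n * w^2))^2"
    by (simp add: power_divide power_mult_distrib)
  finally have "sqrt (x * \<bar>y\<bar>) \<le> 2 * M / (real n * w^2)"
    using M_gt_1 n_pos by (simp add: real_le_lsqrt)
  then show ?thesis
    by simp
qed

lemma scaled_RstarX_bounds:
  assumes "s \<in> {s0<..<s1}" "2 * Rlo / real n \<le> x'" "x' \<le> 2 * Rhi / real n"
  defines "x \<equiv> 2 * RstarX (fst f s) (snd f s) / real n"
  shows "0 \<le> x" "x \<le> 2 * M^2 / real n" "0 \<le> x'"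
    "\<bar>x - x'\<bar> \<le> 8 * M^3 / w^2 * (dx + dy + 4 / (real n)^2 + 2 / T)"
proof -
  have R: "Rlo \<le> RstarX (fst f s) (snd f s)" "RstarX (fst f s) (snd f s) \<le> Rhi"
    "RstarX (fst f s) (snd f s) \<le> M^2"
    using RstarX_in_range RstarX_le_M_sq assms(1) by auto
  then show "0 \<le> x" "x \<le> 2 * M^2 / real n"
    unfolding x_def using Rlo_ge_half n_pos by (auto intro: divide_right_mono)
  have "0 \<le> 2 * Rlo / real n"
    using Rlo_ge_half n_pos by simp
  then show "0 \<le> x'"
    using assms(2) by linarith
  have "\<bar>x - x'\<bar> \<le> 2 * (Rhi - Rlo) / real n"
    using R assms(2,3) n_pos unfolding x_def by (auto simp: abs_le_iff field_simps)
  also have "\<dots> \<le> 2 * (\<kappa> * (dx + dy + 4 * \<delta> + 2 / T)) / real n"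
    using Rhi_minus_Rlo_le n_pos by (intro divide_right_mono) auto
  also have "\<dots> = 8 * M^3 / w^2 * (dx + dy + 4 / (real n)^2 + 2 / T)"
    using n_pos by simp
  finally show "\<bar>x - x'\<bar> \<le> 8 * M^3 / w^2 * (dx + dy + 4 / (real n)^2 + 2 / T)" .
qed

lemma integrand_le:
  assumes "s \<in> {s0<..<s1}"
  shows "(sqrt (2 * RstarX (fst f s) (snd f s)) - sqrt (dX (fst f) s))^2
    \<le> real n * (EplusX (Ij n j) \<Gamma> T + cell_error M T n w f j)"
proof -
  obtain x' y' where E: "EplusX (Ij n j) \<Gamma> T = (sqrt x' - sqrt y')^2"
    "2 * Rlo / real n \<le> x'" "x' \<le> 2 * Rhi / real n" "\<bar>y' - dx\<bar> \<le> 2 * \<delta>" "0 \<le> y'"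
    by (rule EplusX_cell_approx)
  define x where "x = 2 * RstarX (fst f s) (snd f s) / real n"
  note x = scaled_RstarX_bounds[OF assms E(2,3), folded x_def]
  have "(sqrt x - sqrt dx)^2 \<le> (sqrt x' - sqrt y')^2 + (1 + w) * \<bar>x - x'\<bar> + \<bar>dx - y'\<bar>
      + 2 * sqrt (x * \<bar>dx - y'\<bar>) + y' / w"
    using x(1,3) E(5) f_increments_nonneg w_ge_1 by (intro sqrt_diff_sq_perturb) auto
  also have "\<dots> \<le> EplusX (Ij n j) \<Gamma> T + ((1 + w) * (8 * M^3 / w^2 * (dx + dy + 4 / (real n)^2 + 2 / T))
      + 2 / (real n)^2 + 4 * M / (real n * w^2) + (dx + 2 / (real n)^2) / w)"
  proof -
    have "(1 + w) * \<bar>x - x'\<bar> \<le> (1 + w) * (8 * M^3 / w^2 * (dx + dy + 4 / (real n)^2 + 2 / T))"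
      using x(4) w_ge_1 by (intro mult_left_mono) auto
    moreover have "2 * sqrt (x * \<bar>dx - y'\<bar>) \<le> 4 * M / (real n * w^2)"
      using x(1,2) E(4) by (intro sqrt_cross_term_le) auto
    moreover have "y' / w \<le> (dx + 2 / (real n)^2) / w"
      using E(4) w_ge_1 by (intro divide_right_mono) auto
    ultimately show ?thesis
      using E(1,4) by simp
  qed
  also have "\<dots> \<le> EplusX (Ij n j) \<Gamma> T + cell_error M T n w f j"
    using cell_error_arith[of M w "real n" T dx dy] M_gt_1 w_ge_1 w_pow4 T_gt_1 f_increments_nonneg
    unfolding cell_error_def by simp
  finally show ?thesis
    unfolding integrand_rescale[OF assms] x_def[symmetric] using n_pos by simp
qed

lemma cell_error_nonneg: "0 \<le> cell_error M T n w f j"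
  unfolding cell_error_def using f_increments_nonneg M_gt_1 T_gt_1 w_ge_1 by simp

lemma integral_cell_le:
  fixes h :: "real \<Rightarrow> real"
  defines "h \<equiv> \<lambda>s. (sqrt (2 * RstarX (fst f s) (snd f s)) - sqrt (dX (fst f) s))^2"
  assumes "h integrable_on Ij n j"
  shows "integral (Ij n j) h \<le> EplusX (Ij n j) \<Gamma> T + cell_error M T n w f j"
proof -
  define c where "c = real n * (EplusX (Ij n j) \<Gamma> T + cell_error M T n w f j)"
  have "integral (Ij n j) h = integral {s0<..<s1} h"
    unfolding cell_geometry(5) by (rule integral_open_interval_real)
  also have "\<dots> \<le> integral {s0<..<s1} (\<lambda>_. c)"
    using assms(2) integrand_le unfolding h_def c_def cell_geometry(5)
    by (intro integral_le) (auto simp: integrable_on_open_interval_real)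
  also have "\<dots> = (s1 - s0) * c"
    using cell_geometry(2) by (simp flip: integral_open_interval_real)
  also have "\<dots> = EplusX (Ij n j) \<Gamma> T + cell_error M T n w f j"
    unfolding c_def cell_geometry(4) using n_pos by simp
  finally show ?thesis .
qed

end

lemma sum_cell_error_eq:
  assumes "k \<le> K"
  shows "(\<Sum>j\<in>{k..<K}. cell_error M T n w f j) = 100 * M^3 / w *
    ((fst f (real K / n) - fst f (real k / n)) + (snd f (real K / n) - snd f (real k / n))
      + real (K - k) * (1 / n + 1 / T))"
proof -
  define a b where "a = (\<lambda>i. fst f (real i / real n))" and "b = (\<lambda>i. snd f (real i / real n))"
  have "cell_error M T n w f j = 100 * M^3 / w * ((a (Suc j) - a j) + (b (Suc j) - b j) + (1 / n + 1 / T))"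
    for j
    unfolding cell_error_def a_def b_def by (simp add: add_ac)
  then have "(\<Sum>j\<in>{k..<K}. cell_error M T n w f j)
      = 100 * M^3 / w * (\<Sum>j\<in>{k..<K}. (a (Suc j) - a j) + (b (Suc j) - b j) + (1 / n + 1 / T))"
    by (simp only: sum_distrib_left)
  also have "(\<Sum>j\<in>{k..<K}. (a (Suc j) - a j) + (b (Suc j) - b j) + (1 / n + 1 / T))
      = (a K - a k) + (b K - b k) + real (K - k) * (1 / n + 1 / T)"
    using assms by (simp add: sum.distrib sum_Suc_diff')
  finally show ?thesis
    unfolding a_def b_def .
qed

lemma sum_cell_error_le:
  assumes "1 \<le> M" "1 \<le> T" "1 \<le> w" "0 < n" "fst f \<in> G M" "snd f \<in> G M" "k \<le> K" "K \<le> n"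
  shows "(\<Sum>j\<in>{k..<K}. cell_error M T n w f j) \<le> 300 * (M^4 / w + M^3 * real n / sqrt T)"
proof -
  have "0 \<le> real k / real n" "real k / real n \<le> real K / real n" "real K / real n \<le> 1"
    using assms(4,7,8) by (auto intro: divide_right_mono)
  then have "fst f (real K / n) - fst f (real k / n) \<le> M" "snd f (real K / n) - snd f (real k / n) \<le> M"
    using assms(1,5,6) by (auto intro: G_increment_le)
  moreover have "real (K - k) * (1 / n + 1 / T) \<le> real n * (1 / n + 1 / T)"
    using assms(2,8) by (intro mult_right_mono) auto
  moreover have "real n * (1 / n + 1 / T) = 1 + real n / T"
    using assms(4) by (simp add: distrib_left)
  ultimately have "(fst f (real K / n) - fst f (real k / n)) + (snd f (real K / n) - snd f (real k / n))
      + real (K - k) * (1 / n + 1 / T) \<le> 3 * M + real n / T"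
    using assms(1) by linarith
  moreover have "0 \<le> 100 * M^3 / w"
    using assms(1,3) by simp
  ultimately have "(\<Sum>j\<in>{k..<K}. cell_error M T n w f j) \<le> 100 * M^3 / w * (3 * M + real n / T)"
    unfolding sum_cell_error_eq[OF assms(7)] by (rule mult_left_mono)
  also have "\<dots> = 300 * (M^4 / w) + 100 * (M^3 * real n / (w * T))"
    using assms(2,3) by (simp add: field_simps eval_nat_numeral)
  also have "\<dots> \<le> 300 * (M^4 / w + M^3 * real n / sqrt T)"
  proof -
    have "sqrt T \<le> sqrt (T * T)"
      using assms(2) by (intro real_sqrt_le_mono) simp
    also have "\<dots> \<le> w * T"
      using assms(2,3) by simp
    finally have "M^3 * real n / (w * T) \<le> M^3 * real n / sqrt T"
      using assms(1-3) by (intro divide_left_mono) auto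
    moreover have "0 \<le> M^3 * real n / sqrt T"
      using assms(1,2) by simp
    ultimately show ?thesis
      unfolding distrib_left by (intro add_left_mono) linarith
  qed
  finally show ?thesis .
qed

lemma integral_le_sum_cells:
  fixes f :: path2 and h :: "real \<Rightarrow> real"
  defines "h \<equiv> \<lambda>s. (sqrt (2 * RstarX (fst f s) (snd f s)) - sqrt (dX (fst f) s))^2"
  assumes "1 < M" "1 < T" "2 * M \<le> real n" "fst f \<in> PL n" "fst f \<in> G M" "snd f \<in> G M"
    and "w^4 = real n" "1 \<le> w" "w^2 \<le> real k" "k \<le> K" "K \<le> n"
  shows "integral {real k / n .. real K / n} h
    \<le> (\<Sum>j\<in>{k..<K}. EplusX (Ij n j) (Gamma M T f n) T + cell_error M T n w f j)"
proof -
  have cell: "grid_cell M T n j f w" if "j \<in> {k..<K}" for j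
    using assms(2-12) that by unfold_locales auto
  show ?thesis
  proof (cases "h integrable_on {real k / n .. real K / n}")
    case True
    have "mono (\<lambda>i. real i / real n)"
      by (auto intro!: monoI divide_right_mono)
    then have "integral {real k / n .. real K / n} h = (\<Sum>j\<in>{k..<K}. integral (Ij n j) h)"
      using integral_consecutive_sum[of "\<lambda>i. real i / real n", OF _ assms(11) True]
      unfolding Ij_def by (simp add: add.commute)
    also have "\<dots> \<le> (\<Sum>j\<in>{k..<K}. EplusX (Ij n j) (Gamma M T f n) T + cell_error M T n w f j)"
    proof (rule sum_mono)
      fix j assume j: "j \<in> {k..<K}"
      then have "Ij n j \<subseteq> {real k / n .. real K / n}"
        unfolding Ij_def by (auto intro: order.trans[OF _ divide_right_mono])
      then have "h integrable_on Ij n j"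
        using True unfolding Ij_def by (rule integrable_subinterval_real[rotated])
      then show "integral (Ij n j) h \<le> EplusX (Ij n j) (Gamma M T f n) T + cell_error M T n w f j"
        using grid_cell.integral_cell_le[OF cell[OF j]] unfolding h_def by blast
    qed
    finally show ?thesis .
  next
    case False
    have "0 \<le> (\<Sum>j\<in>{k..<K}. EplusX (Ij n j) (Gamma M T f n) T + cell_error M T n w f j)"
      using EplusX_nonneg grid_cell.cell_error_nonneg[OF cell] by (intro sum_nonneg add_nonneg_nonneg)
    then show ?thesis
      using False by (simp add: not_integrable_integral)
  qed
qed

lemma floor_index_bounds:
  fixes \<theta> :: real and n k :: nat
  assumes "0 < \<theta>" "\<theta> \<le> 1" "0 < n" "int k \<le> \<lfloor>\<theta> * real n\<rfloor> - 1"
  shows "k \<le> nat \<lfloor>\<theta> * real n\<rfloor>" "nat \<lfloor>\<theta> * real n\<rfloor> \<le> n"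
    "real_of_int \<lfloor>\<theta> * real n\<rfloor> = real (nat \<lfloor>\<theta> * real n\<rfloor>)"
proof -
  have "real_of_int \<lfloor>\<theta> * real n\<rfloor> \<le> real n"
    using assms(1-3) of_int_floor_le[of "\<theta> * real n"] mult_left_le_one_le[of "real n" \<theta>] by linarith
  then show "k \<le> nat \<lfloor>\<theta> * real n\<rfloor>" "nat \<lfloor>\<theta> * real n\<rfloor> \<le> n"
    "real_of_int \<lfloor>\<theta> * real n\<rfloor> = real (nat \<lfloor>\<theta> * real n\<rfloor>)"
    using assms(4) by linarith+
qed

lemma fourth_root_bounds:
  fixes n k :: nat
  assumes "0 < n" "\<lceil>sqrt (real n)\<rceil> \<le> int k"
  shows "(real n powr (1/4))^4 = real n" "1 \<le> real n powr (1/4)" "(real n powr (1/4))^2 \<le> real k"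
proof -
  have "(real n powr (1/4))^2 = sqrt (real n)"
    using assms(1) by (simp add: powr_power powr_half_sqrt[symmetric])
  also have "\<dots> \<le> real k"
    using assms(2) le_of_int_ceiling[of "sqrt (real n)"] by linarith
  finally show "(real n powr (1/4))^4 = real n" "1 \<le> real n powr (1/4)" "(real n powr (1/4))^2 \<le> real k"
    using assms(1) by (auto simp: powr_power intro: ge_one_powr_ge_zero)
qed

theorem proposition2p4:
  shows "\<exists>C::real. \<forall>(\<theta>::real) (M::real) (T::real) (n::nat) (f::path2) (k::nat).
    0 < \<theta> \<and> \<theta> \<le> 1 \<and> M > 1 \<and> T > 1 \<and> real n \<ge> 2 * M
    \<and> f \<in> (PL n \<inter> G M) \<times> (PL n \<inter> G M)
    \<and> \<lceil>sqrt (real n)\<rceil> \<le> int k \<and> int k \<le> \<lfloor>\<theta> * real n\<rfloor> - 1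
    \<longrightarrow>
    (\<Sum>j\<in>{k..<nat \<lfloor>\<theta> * real n\<rfloor>}. EplusX (Ij n j) (Gamma M T f n) T)
      \<ge> integral {real k / real n .. real_of_int \<lfloor>\<theta> * real n\<rfloor> / real n}
            (\<lambda>s. (sqrt (2 * RstarX (fst f s) (snd f s)) - sqrt (dX (fst f) s))^2)
        - C * (M^4 / real n powr (1/4) + M^3 * real n / sqrt T)"
proof (intro exI[of _ 300] allI impI, elim conjE)
  fix \<theta> M T :: real and n k :: nat and f :: path2
  assume \<theta>: "0 < \<theta>" "\<theta> \<le> 1" and M: "M > 1" and T: "T > 1" and n: "real n \<ge> 2 * M"
    and f: "f \<in> (PL n \<inter> G M) \<times> (PL n \<inter> G M)"
    and k: "\<lceil>sqrt (real n)\<rceil> \<le> int k" "int k \<le> \<lfloor>\<theta> * real n\<rfloor> - 1"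
  let ?K = "nat \<lfloor>\<theta> * real n\<rfloor>" and ?w = "real n powr (1/4)"
  have n_pos: "0 < n"
    using M n by simp
  note K = floor_index_bounds[OF \<theta> n_pos k(2)] and w = fourth_root_bounds[OF n_pos k(1)]
  have "integral {real k / n .. real ?K / n}
      (\<lambda>s. (sqrt (2 * RstarX (fst f s) (snd f s)) - sqrt (dX (fst f) s))^2)
    \<le> (\<Sum>j\<in>{k..<?K}. EplusX (Ij n j) (Gamma M T f n) T + cell_error M T n ?w f j)"
    using M T n f w K by (intro integral_le_sum_cells) (auto simp: mem_Times_iff)
  also have "\<dots> = (\<Sum>j\<in>{k..<?K}. EplusX (Ij n j) (Gamma M T f n) T) + (\<Sum>j\<in>{k..<?K}. cell_error M T n ?w f j)"
    by (rule sum.distrib)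
  finally show "(\<Sum>j\<in>{k..<?K}. EplusX (Ij n j) (Gamma M T f n) T)
      \<ge> integral {real k / real n .. real_of_int \<lfloor>\<theta> * real n\<rfloor> / real n}
            (\<lambda>s. (sqrt (2 * RstarX (fst f s) (snd f s)) - sqrt (dX (fst f) s))^2)
        - 300 * (M^4 / ?w + M^3 * real n / sqrt T)"
    using sum_cell_error_le[of M T ?w n f k ?K] M T w n_pos f K by (auto simp: mem_Times_iff)
qed

end
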